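(* Let $S$ be a scheme on $X$, $\mathbb F$ a field, $x\in X$, $E_a^*=E_a^*(x)$, and let $R_i,R_j,R_\ell,R_m\in S$. If $R_{i'}R_\ell=\{R_j\}$, then $E_i^*A_mE_\ell^*\neq O$ if and only if $m=j$; moreover $E_i^*A_jE_\ell^*=E_i^*JE_\ell^*$. In particular, if $k_i=1$ or $k_\ell=1$, then there is a unique $R_n\in S$ with $E_i^*A_nE_\ell^*\neq O$, and $E_i^*A_nE_\ell^*=E_i^*JE_\ell^*$.
   Context: Let $X$ be a nonempty finite set. A scheme of class $d$ on $X$ is a partition $S=\{R_0,\dots,R_d\}$ of $X\times X$ into nonempty sets such that $R_0=\{(b,b):b\in X\}$; for each $c$ there is $c'$ with $R_{c'}=\{(f,e):(e,f)\in R_c\}$; and for all $i,j,k$ the intersection number $p_{ij}^k=|\{\ell\in X:(m,\ell)\in R_i,(\ell,n)\in R_j\}|$ does not depend on $(m,n)\in R_k$. The valency is $k_a=p_{aa'}^0$; the complex product is $R_aR_b=\{R_c\in S:p_{ab}^c>0\}$. For $y\in X$, $yR_a=\{z:(y,z)\in R_a\}$. $A_a\in M_X(\mathbb F)$ is the $(0,1)$ adjacency matrix of $R_a$, $E_a^*(y)$ is the diagonal $(0,1)$-matrix with ones exactly at positions indexed by $yR_a$, $J$ is the all-ones matrix and $O$ the zero matrix. *)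

theory Defs
  imports Main
begin

text \<open>A scheme of class d on X: relations R 0, ..., R d (indexed by nat, only indices
  up to d matter). Matrices in M_X(F) are functions 'a => 'a => 'f that vanish
  outside X x X; products sum over X.\<close>

definition int_pt :: "('a \<times> 'a) set \<Rightarrow> ('a \<times> 'a) set \<Rightarrow> 'a \<Rightarrow> 'a \<Rightarrow> nat" where
  "int_pt Ri Rj m n = card {l. (m, l) \<in> Ri \<and> (l, n) \<in> Rj}"

definition scheme :: "'a set \<Rightarrow> nat \<Rightarrow> (nat \<Rightarrow> ('a \<times> 'a) set) \<Rightarrow> bool" where
  "scheme X d R \<longleftrightarrow>
     finite X \<and> X \<noteq> {} \<and>
     (\<forall>i\<le>d. R i \<noteq> {} \<and> R i \<subseteq> X \<times> X) \<and>
     (\<forall>i\<le>d. \<forall>j\<le>d. i \<noteq> j \<longrightarrow> R i \<inter> R j = {}) \<and>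
     (\<Union>i\<in>{0..d}. R i) = X \<times> X \<and>
     R 0 = Id_on X \<and>
     (\<forall>c\<le>d. \<exists>c'\<le>d. R c' = converse (R c)) \<and>
     (\<forall>i\<le>d. \<forall>j\<le>d. \<forall>k\<le>d. \<forall>m n m' n'. (m, n) \<in> R k \<longrightarrow> (m', n') \<in> R k \<longrightarrow>
        int_pt (R i) (R j) m n = int_pt (R i) (R j) m' n')"

definition conv_idx :: "nat \<Rightarrow> (nat \<Rightarrow> ('a \<times> 'a) set) \<Rightarrow> nat \<Rightarrow> nat" where
  "conv_idx d R c = (THE c'. c' \<le> d \<and> R c' = converse (R c))"

definition int_num :: "(nat \<Rightarrow> ('a \<times> 'a) set) \<Rightarrow> nat \<Rightarrow> nat \<Rightarrow> nat \<Rightarrow> nat" where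
  "int_num R i j k = (let (m, n) = (SOME mn. mn \<in> R k) in int_pt (R i) (R j) m n)"

definition valency :: "nat \<Rightarrow> (nat \<Rightarrow> ('a \<times> 'a) set) \<Rightarrow> nat \<Rightarrow> nat" where
  "valency d R a = int_num R a (conv_idx d R a) 0"

definition complex_prod :: "nat \<Rightarrow> (nat \<Rightarrow> ('a \<times> 'a) set) \<Rightarrow> nat \<Rightarrow> nat \<Rightarrow> ('a \<times> 'a) set set" where
  "complex_prod d R a b = {R c | c. c \<le> d \<and> int_num R a b c > 0}"

definition adj_mat :: "(nat \<Rightarrow> ('a \<times> 'a) set) \<Rightarrow> nat \<Rightarrow> 'a \<Rightarrow> 'a \<Rightarrow> 'f::field" where
  "adj_mat R a y z = (if (y, z) \<in> R a then 1 else 0)"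

definition dual_idem :: "(nat \<Rightarrow> ('a \<times> 'a) set) \<Rightarrow> 'a \<Rightarrow> nat \<Rightarrow> 'a \<Rightarrow> 'a \<Rightarrow> 'f::field" where
  "dual_idem R x a y z = (if y = z \<and> (x, y) \<in> R a then 1 else 0)"

definition all_ones :: "'a set \<Rightarrow> 'a \<Rightarrow> 'a \<Rightarrow> 'f::field" where
  "all_ones X y z = (if y \<in> X \<and> z \<in> X then 1 else 0)"

definition zero_mat :: "'a \<Rightarrow> 'a \<Rightarrow> 'f::field" where
  "zero_mat y z = 0"

definition mat_mult :: "'a set \<Rightarrow> ('a \<Rightarrow> 'a \<Rightarrow> 'f::field) \<Rightarrow> ('a \<Rightarrow> 'a \<Rightarrow> 'f) \<Rightarrow> 'a \<Rightarrow> 'a \<Rightarrow> 'f" where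
  "mat_mult X M N y z = (\<Sum>w\<in>X. M y w * N w z)"

end

theory Submission
  imports Defs
begin

text \<open>Write xR_a for R a `` {x}. The (y, z) entry of E_i^* M E_l^* is M y z for y in xR_i and
  z in xR_l, and 0 otherwise. So E_i^* A_m E_l^* is nonzero iff R m meets xR_i x xR_l, and
  everything follows once xR_i x xR_l is contained in a single relation R n.
  If R_i' R_l = {R_j}, every (y, z) in xR_i x xR_l lies in some R c with p_{i'l}^c > 0, witnessed
  by x, hence R c = R j. If xR_i = {y0}, choose z1 in xR_l and R c containing (y0, z1); since
  p_{ic}^l does not depend on the pair in R l, every z in xR_l is reached from x through y0 and
  an R c step. The case k_l = 1 is the converse one.\<close>

abbreviation dual_sandwich ::
  "'a set \<Rightarrow> (nat \<Rightarrow> ('a \<times> 'a) set) \<Rightarrow> 'a \<Rightarrow> nat \<Rightarrow> ('a \<Rightarrow> 'a \<Rightarrow> 'f::field) \<Rightarrow> nat \<Rightarrow> 'a \<Rightarrow> 'a \<Rightarrow> 'f"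
  where "dual_sandwich X R x i M l \<equiv> mat_mult X (mat_mult X (dual_idem R x i) M) (dual_idem R x l)"

lemma scheme_finite: "scheme X d R \<Longrightarrow> finite X"
  unfolding scheme_def by (elim conjE)

lemma scheme_rel_subset: "scheme X d R \<Longrightarrow> i \<le> d \<Longrightarrow> R i \<subseteq> X \<times> X"
  unfolding scheme_def by (elim conjE) blast

lemma scheme_rel_nonempty: "scheme X d R \<Longrightarrow> i \<le> d \<Longrightarrow> R i \<noteq> {}"
  unfolding scheme_def by (elim conjE) blast

lemma scheme_rel_unique:
  "scheme X d R \<Longrightarrow> i \<le> d \<Longrightarrow> j \<le> d \<Longrightarrow> p \<in> R i \<Longrightarrow> p \<in> R j \<Longrightarrow> i = j"
  unfolding scheme_def by (elim conjE) blast

lemma scheme_rel_exists: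
  assumes "scheme X d R" and "y \<in> X" and "z \<in> X"
  shows "\<exists>c\<le>d. (y, z) \<in> R c"
proof -
  have "(\<Union>i\<in>{0..d}. R i) = X \<times> X"
    using assms(1) unfolding scheme_def by (elim conjE)
  with assms(2,3) have "(y, z) \<in> (\<Union>i\<in>{0..d}. R i)"
    by simp
  then show ?thesis
    by auto
qed

lemma scheme_diag: "scheme X d R \<Longrightarrow> R 0 = Id_on X"
  unfolding scheme_def by (elim conjE)

lemma scheme_converse: "scheme X d R \<Longrightarrow> c \<le> d \<Longrightarrow> \<exists>c'\<le>d. R c' = converse (R c)"
  unfolding scheme_def by (elim conjE) blast

lemma scheme_int_pt_const:
  assumes "scheme X d R" and "i \<le> d" "j \<le> d" "k \<le> d" and "(m, n) \<in> R k" "(m', n') \<in> R k"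
  shows "int_pt (R i) (R j) m n = int_pt (R i) (R j) m' n'"
proof -
  have "\<forall>i\<le>d. \<forall>j\<le>d. \<forall>k\<le>d. \<forall>m n m' n'. (m, n) \<in> R k \<longrightarrow> (m', n') \<in> R k \<longrightarrow>
        int_pt (R i) (R j) m n = int_pt (R i) (R j) m' n'"
    using assms(1) unfolding scheme_def by (elim conjE)
  with assms(2-6) show ?thesis
    by blast
qed

lemma conv_idx:
  assumes S: "scheme X d R" and c: "c \<le> d"
  shows conv_idx_le: "conv_idx d R c \<le> d"
    and rel_conv_idx: "R (conv_idx d R c) = converse (R c)"
proof -
  obtain c' where c': "c' \<le> d" "R c' = converse (R c)"
    using scheme_converse[OF S c] by blast
  have "conv_idx d R c = c'"
    unfolding conv_idx_def
  proof (rule the_equality)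
    fix c'' assume "c'' \<le> d \<and> R c'' = converse (R c)"
    with c' scheme_rel_nonempty[OF S] show "c'' = c'"
      by (metis ex_in_conv scheme_rel_unique[OF S])
  qed (use c' in simp)
  with c' show "conv_idx d R c \<le> d" "R (conv_idx d R c) = converse (R c)" by simp_all
qed

lemma int_pt_pos_iff:
  assumes "finite X" and "Ri \<subseteq> X \<times> X"
  shows "0 < int_pt Ri Rj m n \<longleftrightarrow> (\<exists>w. (m, w) \<in> Ri \<and> (w, n) \<in> Rj)"
proof -
  have "finite {w. (m, w) \<in> Ri \<and> (w, n) \<in> Rj}"
    using assms by (auto intro: finite_subset)
  then show ?thesis
    unfolding int_pt_def by (auto simp: card_gt_0_iff)
qed

lemma int_num_eq_int_pt:
  assumes S: "scheme X d R" and "i \<le> d" "j \<le> d" "k \<le> d" and mn: "(m, n) \<in> R k"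
  shows "int_num R i j k = int_pt (R i) (R j) m n"
proof -
  obtain m' n' where chosen: "(SOME p. p \<in> R k) = (m', n')"
    by fastforce
  have "(m', n') \<in> R k"
    using someI[of "\<lambda>p. p \<in> R k", OF mn] chosen by simp
  then show ?thesis
    unfolding int_num_def chosen using scheme_int_pt_const[OF S assms(2-4) _ mn] by simp
qed

lemma valency_eq_card:
  assumes S: "scheme X d R" and x: "x \<in> X" and a: "a \<le> d"
  shows "valency d R a = card (R a `` {x})"
proof -
  have "(x, x) \<in> R 0"
    using x scheme_diag[OF S] by auto
  then have "valency d R a = int_pt (R a) (R (conv_idx d R a)) x x"
    unfolding valency_def using int_num_eq_int_pt[OF S a conv_idx_le[OF S a]] by simp
  also have "\<dots> = card (R a `` {x})"
    unfolding int_pt_def rel_conv_idx[OF S a] by (simp add: Image_singleton)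
  finally show ?thesis .
qed

lemma sphere_nonempty:
  assumes S: "scheme X d R" and x: "x \<in> X" and a: "a \<le> d"
  shows "R a `` {x} \<noteq> {}"
proof -
  obtain u v where uv: "(u, v) \<in> R a"
    using scheme_rel_nonempty[OF S a] by auto
  have u: "u \<in> X"
    using uv scheme_rel_subset[OF S a] by auto
  have "finite (R a `` {u})"
    using scheme_finite[OF S] scheme_rel_subset[OF S a] by (auto intro: finite_subset)
  with uv have "0 < card (R a `` {u})"
    by (auto simp: card_gt_0_iff)
  also have "card (R a `` {u}) = card (R a `` {x})"
    using valency_eq_card[OF S u a] valency_eq_card[OF S x a] by simp
  finally show ?thesis
    by auto
qed

lemma mat_mult_dual_idem_left:
  assumes "finite X"
  shows "mat_mult X (dual_idem R x i) M y z = (if y \<in> X \<and> (x, y) \<in> R i then M y z else 0)"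
proof -
  have "mat_mult X (dual_idem R x i) M y z =
      (\<Sum>w\<in>X. if w = y then (if (x, y) \<in> R i then M y z else 0) else 0)"
    unfolding mat_mult_def dual_idem_def by (rule sum.cong) auto
  with assms show ?thesis
    by (simp add: sum.delta)
qed

lemma mat_mult_dual_idem_right:
  assumes "finite X"
  shows "mat_mult X M (dual_idem R x l) y z = (if z \<in> X \<and> (x, z) \<in> R l then M y z else 0)"
proof -
  have "mat_mult X M (dual_idem R x l) y z =
      (\<Sum>w\<in>X. if w = z then (if (x, z) \<in> R l then M y z else 0) else 0)"
    unfolding mat_mult_def dual_idem_def by (rule sum.cong) auto
  with assms show ?thesis
    by (simp add: sum.delta)
qed

lemma dual_sandwich_apply:
  assumes "finite X"
  shows "dual_sandwich X R x i M l y z =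
    (if y \<in> X \<and> (x, y) \<in> R i \<and> z \<in> X \<and> (x, z) \<in> R l then M y z else 0)"
  using assms by (simp add: mat_mult_dual_idem_left mat_mult_dual_idem_right)

lemma dual_sandwich_adj_mat_nonzero_iff:
  assumes S: "scheme X d R" and x: "x \<in> X" and "i \<le> d" "l \<le> d" "m \<le> d" "n \<le> d"
    and spheres: "R i `` {x} \<times> R l `` {x} \<subseteq> R n"
  shows "dual_sandwich X R x i (adj_mat R m) l \<noteq> (zero_mat :: 'a \<Rightarrow> 'a \<Rightarrow> 'f::field) \<longleftrightarrow> m = n"
proof
  assume "dual_sandwich X R x i (adj_mat R m) l \<noteq> (zero_mat :: 'a \<Rightarrow> 'a \<Rightarrow> 'f)"
  then obtain y z where "(x, y) \<in> R i" "(x, z) \<in> R l" "(y, z) \<in> R m"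
    by (auto simp: fun_eq_iff zero_mat_def dual_sandwich_apply[OF scheme_finite[OF S]] adj_mat_def
        split: if_splits)
  with spheres show "m = n"
    using scheme_rel_unique[OF S \<open>m \<le> d\<close> \<open>n \<le> d\<close>] by blast
next
  assume "m = n"
  obtain y z where "(x, y) \<in> R i" "(x, z) \<in> R l"
    using sphere_nonempty[OF S x \<open>i \<le> d\<close>] sphere_nonempty[OF S x \<open>l \<le> d\<close>] by blast
  moreover from calculation have "y \<in> X" "z \<in> X"
    using scheme_rel_subset[OF S \<open>i \<le> d\<close>] scheme_rel_subset[OF S \<open>l \<le> d\<close>] by auto
  ultimately have "dual_sandwich X R x i (adj_mat R m) l y z = (1 :: 'f)"
    using spheres \<open>m = n\<close> by (auto simp: dual_sandwich_apply[OF scheme_finite[OF S]] adj_mat_def)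
  then show "dual_sandwich X R x i (adj_mat R m) l \<noteq> (zero_mat :: 'a \<Rightarrow> 'a \<Rightarrow> 'f)"
    by (auto simp: zero_mat_def)
qed

lemma dual_sandwich_adj_mat_eq_all_ones:
  assumes "finite X" and spheres: "R i `` {x} \<times> R l `` {x} \<subseteq> R n"
  shows "dual_sandwich X R x i (adj_mat R n) l = dual_sandwich X R x i (all_ones X) l"
  using spheres by (auto simp: fun_eq_iff dual_sandwich_apply[OF \<open>finite X\<close>] adj_mat_def all_ones_def)

lemma complex_prod_singleton_imp_spheres_subset:
  assumes S: "scheme X d R" and i: "i \<le> d" and l: "l \<le> d"
    and prod: "complex_prod d R (conv_idx d R i) l = {R j}"
  shows "R i `` {x} \<times> R l `` {x} \<subseteq> R j"
proof clarify
  fix y z assume y: "(x, y) \<in> R i" and z: "(x, z) \<in> R l"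
  have "y \<in> X" "z \<in> X"
    using y z scheme_rel_subset[OF S i] scheme_rel_subset[OF S l] by auto
  then obtain c where c: "c \<le> d" "(y, z) \<in> R c"
    using scheme_rel_exists[OF S] by blast
  have "(y, x) \<in> R (conv_idx d R i)"
    using y rel_conv_idx[OF S i] by simp
  with z have "0 < int_pt (R (conv_idx d R i)) (R l) y z"
    using int_pt_pos_iff[OF scheme_finite[OF S] scheme_rel_subset[OF S conv_idx_le[OF S i]]] by blast
  then have "R c \<in> complex_prod d R (conv_idx d R i) l"
    unfolding complex_prod_def using c int_num_eq_int_pt[OF S conv_idx_le[OF S i] l c(1) c(2)] by auto
  with prod c show "(y, z) \<in> R j"
    by simp
qed

lemma singleton_sphere_times_sphere_subset:
  assumes S: "scheme X d R" and x: "x \<in> X" and i: "i \<le> d" and l: "l \<le> d"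
    and sphere_i: "R i `` {x} = {y}"
  shows "\<exists>n\<le>d. {y} \<times> R l `` {x} \<subseteq> R n"
proof -
  have xy: "(x, y) \<in> R i"
    using sphere_i by auto
  obtain z1 where xz1: "(x, z1) \<in> R l"
    using sphere_nonempty[OF S x l] by auto
  have "y \<in> X" "z1 \<in> X"
    using xy xz1 scheme_rel_subset[OF S i] scheme_rel_subset[OF S l] by auto
  then obtain c where c: "c \<le> d" "(y, z1) \<in> R c"
    using scheme_rel_exists[OF S] by blast
  have "(y, z) \<in> R c" if xz: "(x, z) \<in> R l" for z
  proof -
    note pos_iff = int_pt_pos_iff[OF scheme_finite[OF S] scheme_rel_subset[OF S i]]
    have "0 < int_pt (R i) (R c) x z1"
      using pos_iff xy c(2) by blast
    also have "int_pt (R i) (R c) x z1 = int_pt (R i) (R c) x z"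
      by (rule scheme_int_pt_const[OF S i c(1) l xz1 xz])
    finally obtain w where "(x, w) \<in> R i" "(w, z) \<in> R c"
      using pos_iff by blast
    with sphere_i show ?thesis
      by auto
  qed
  with c(1) show ?thesis
    by blast
qed

lemma valency_one_imp_spheres_subset:
  assumes S: "scheme X d R" and x: "x \<in> X" and i: "i \<le> d" and l: "l \<le> d"
    and "valency d R i = 1 \<or> valency d R l = 1"
  shows "\<exists>n\<le>d. R i `` {x} \<times> R l `` {x} \<subseteq> R n"
  using assms(5)
proof
  assume "valency d R i = 1"
  then obtain y where "R i `` {x} = {y}"
    using valency_eq_card[OF S x i] by (metis card_1_singletonE)
  with singleton_sphere_times_sphere_subset[OF S x i l] show ?thesis
    by metis
next
  assume "valency d R l = 1"
  then obtain z where sphere_l: "R l `` {x} = {z}"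
    using valency_eq_card[OF S x l] by (metis card_1_singletonE)
  then obtain c where c: "c \<le> d" "{z} \<times> R i `` {x} \<subseteq> R c"
    using singleton_sphere_times_sphere_subset[OF S x l i] by metis
  then have "R i `` {x} \<times> R l `` {x} \<subseteq> R (conv_idx d R c)"
    using sphere_l rel_conv_idx[OF S c(1)] by auto
  with conv_idx_le[OF S c(1)] show ?thesis
    by blast
qed

theorem lemma3p2:
  fixes X :: "'a set" and d :: nat and R :: "nat \<Rightarrow> ('a \<times> 'a) set" and x :: 'a
  assumes "scheme X d R" and "x \<in> X"
  shows "(\<forall>i\<le>d. \<forall>j\<le>d. \<forall>l\<le>d.
            complex_prod d R (conv_idx d R i) l = {R j} \<longrightarrow>
              (\<forall>m\<le>d. mat_mult X (mat_mult X (dual_idem R x i) (adj_mat R m)) (dual_idem R x l)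
                         \<noteq> (zero_mat :: 'a \<Rightarrow> 'a \<Rightarrow> 'f::field) \<longleftrightarrow> m = j) \<and>
              mat_mult X (mat_mult X (dual_idem R x i) (adj_mat R j)) (dual_idem R x l)
                = mat_mult X (mat_mult X (dual_idem R x i) (all_ones X)) (dual_idem R x l :: 'a \<Rightarrow> 'a \<Rightarrow> 'f))
       \<and> (\<forall>i\<le>d. \<forall>l\<le>d. valency d R i = 1 \<or> valency d R l = 1 \<longrightarrow>
            (\<exists>!n. n \<le> d \<and> mat_mult X (mat_mult X (dual_idem R x i) (adj_mat R n)) (dual_idem R x l)
                         \<noteq> (zero_mat :: 'a \<Rightarrow> 'a \<Rightarrow> 'f)) \<and>
            (\<forall>n\<le>d. mat_mult X (mat_mult X (dual_idem R x i) (adj_mat R n)) (dual_idem R x l)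
                         \<noteq> (zero_mat :: 'a \<Rightarrow> 'a \<Rightarrow> 'f) \<longrightarrow>
                    mat_mult X (mat_mult X (dual_idem R x i) (adj_mat R n)) (dual_idem R x l)
                      = mat_mult X (mat_mult X (dual_idem R x i) (all_ones X)) (dual_idem R x l :: 'a \<Rightarrow> 'a \<Rightarrow> 'f)))"
proof -
  note S = assms(1) and x = assms(2)
  note nonzero_iff = dual_sandwich_adj_mat_nonzero_iff[OF S x]
  note eq_all_ones = dual_sandwich_adj_mat_eq_all_ones[OF scheme_finite[OF S]]
  show ?thesis
  proof (intro conjI allI impI)
    fix i j l m assume "i \<le> d" "j \<le> d" "l \<le> d" "m \<le> d"
      and "complex_prod d R (conv_idx d R i) l = {R j}"
    with complex_prod_singleton_imp_spheres_subset[OF S]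
    show "dual_sandwich X R x i (adj_mat R m) l \<noteq> (zero_mat :: 'a \<Rightarrow> 'a \<Rightarrow> 'f) \<longleftrightarrow> m = j"
      by (simp add: nonzero_iff)
  next
    fix i j l assume "i \<le> d" "j \<le> d" "l \<le> d" and "complex_prod d R (conv_idx d R i) l = {R j}"
    with complex_prod_singleton_imp_spheres_subset[OF S]
    show "dual_sandwich X R x i (adj_mat R j) l = dual_sandwich X R x i (all_ones X) l"
      by (simp add: eq_all_ones)
  next
    fix i l assume i: "i \<le> d" and l: "l \<le> d" and "valency d R i = 1 \<or> valency d R l = 1"
    then obtain n where n: "n \<le> d" and spheres: "R i `` {x} \<times> R l `` {x} \<subseteq> R n"
      using valency_one_imp_spheres_subset[OF S x] by blast
    with nonzero_iff[OF i l]
    show "\<exists>!n. n \<le> d \<and> dual_sandwich X R x i (adj_mat R n) l \<noteq> (zero_mat :: 'a \<Rightarrow> 'a \<Rightarrow> 'f)"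
      by blast
  next
    fix i l m assume i: "i \<le> d" and l: "l \<le> d" and "valency d R i = 1 \<or> valency d R l = 1"
      and "m \<le> d" and "dual_sandwich X R x i (adj_mat R m) l \<noteq> (zero_mat :: 'a \<Rightarrow> 'a \<Rightarrow> 'f)"
    moreover obtain n where n: "n \<le> d" and spheres: "R i `` {x} \<times> R l `` {x} \<subseteq> R n"
      using valency_one_imp_spheres_subset[OF S x i l] calculation(3) by blast
    ultimately have "m = n"
      using nonzero_iff[OF i l _ n spheres] by blast
    with eq_all_ones[OF spheres]
    show "dual_sandwich X R x i (adj_mat R m) l = dual_sandwich X R x i (all_ones X) l"
      by simp
  qed
qed

end
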